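(* Assume $\sigma_1(x)=\tfrac12\sigma_1''(0)\,x(x-a_1)$ with $\sigma_1''(0)\ne0$ and real $a_1>0$, and $\frac{\tau'(0)}{\frac12\sigma_1''(0)}=-\frac{1}{1-q^{-1}}$, so that $\sigma_2(x)=\sigma_2'(0)x$ with $\sigma_2'(0)=q\big[(1-q^{-1})\tau(0)-\tfrac12\sigma_1''(0)a_1\big]\ne0$. Let $y_0=q^{-1}\Big[1-\frac{(1-q^{-1})}{a_1}\frac{\tau(0)}{\frac12\sigma_1''(0)}\Big]$ and assume $0<qy_0<1$. Put $b=a_1$ and $$\rho(x)=|x|^{\alpha}(qx/b;q)_\infty,\qquad q^{\alpha}=-\frac{q^{-2}\sigma_2'(0)}{\tfrac12\sigma_1''(0)b}.$$ Then there exist polynomials $P_n$, $n\in\mathbb{N}_0$, with $P_n$ of degree $n$ a solution of the q-EHT with $\lambda=\lambda_n$, and nonzero constants $d_n^2$, such that for all $m,n\in\mathbb{N}_0$ $$\int_0^{b}P_n(x)P_m(x)\rho(x)\,d_qx=d_n^2\delta_{mn},$$ i.e. orthogonality with respect to $\rho$ supported on $\{q^kb\}_{k\in\mathbb{N}_0}$.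
   Context: Throughout $0<q<1$. For a function $y$ and $\zeta\in\{q,q^{-1}\}$, $D_\zeta y(x)=\frac{y(x)-y(\zeta x)}{(1-\zeta)x}$ for $x\ne0$ and $D_\zeta y(0)=y'(0)$; $[n]_q=\frac{1-q^n}{1-q}$. Let $\sigma_1$ be a real polynomial of degree at most two, $\tau(x)=\tau'(0)x+\tau(0)$ a real polynomial with $\tau'(0)\ne0$, and $\sigma_2(x):=q[\sigma_1(x)+(1-q^{-1})x\tau(x)]$. The q-EHT with parameter $n$ is $\sigma_1(x)D_{q^{-1}}D_qy(x)+\tau(x)D_qy(x)+\lambda_ny(x)=0$, $\lambda_n=-[n]_q\big(\tau'(0)+\tfrac12[n-1]_{q^{-1}}\sigma_1''(0)\big)$. $(\beta;q)_\infty=\prod_{k\ge0}(1-\beta q^k)$. For $q^\alpha=c$ ($c\ne0$), $\alpha$ is any complex number with $e^{\alpha\ln q}=c$ and $|x|^\alpha:=e^{\alpha\ln|x|}$. For $b>0$, $\int_0^b f(x)\,d_qx=(1-q)b\sum_{j\ge0}q^jf(q^jb)$. *)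

theory Defs
  imports "HOL-Analysis.Analysis" "HOL-Computational_Algebra.Polynomial"
begin

definition qD :: "real \<Rightarrow> (real \<Rightarrow> real) \<Rightarrow> real \<Rightarrow> real" where
  "qD \<zeta> y x = (if x = 0 then deriv y 0 else (y x - y (\<zeta> * x)) / ((1 - \<zeta>) * x))"

definition qnum :: "real \<Rightarrow> int \<Rightarrow> real" where
  "qnum q n = (1 - q powi n) / (1 - q)"

definition qpoch_inf :: "real \<Rightarrow> real \<Rightarrow> real" where
  "qpoch_inf \<beta> q = (\<Prod>k. 1 - \<beta> * q ^ k)"

definition qEHT :: "real \<Rightarrow> (real \<Rightarrow> real) \<Rightarrow> (real \<Rightarrow> real) \<Rightarrow> real \<Rightarrow> (real \<Rightarrow> real) \<Rightarrow> bool" where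
  "qEHT q \<sigma>1 \<tau> lam y \<longleftrightarrow>
     (\<forall>x. \<sigma>1 x * qD (inverse q) (qD q y) x + \<tau> x * qD q y x + lam * y x = 0)"

text \<open>Jackson q-integral over [0,b] converging (as a series) to I:
  (1-q) b \<Sum>_j q^j f(q^j b) = I.\<close>
definition has_qint :: "real \<Rightarrow> (real \<Rightarrow> complex) \<Rightarrow> real \<Rightarrow> complex \<Rightarrow> bool" where
  "has_qint q f b I \<longleftrightarrow>
     (\<lambda>j. complex_of_real ((1 - q) * b * q ^ j) * f (q ^ j * b)) sums I"

end

theory Submission
  imports Defs
begin

text \<open>
  For \<open>\<sigma>\<^sub>1(x) = s x (x - a)\<close> and linear \<open>\<tau>\<close> the q-EHT operator maps \<open>x\<^sup>k\<close> to
  \<open>-\<lambda>\<^sub>k x\<^sup>k\<close> plus a multiple of \<open>x\<^sup>k\<^sup>-\<^sup>1\<close>; it is bidiagonal on coefficients, and since the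
  \<open>\<lambda>\<^sub>k\<close> are pairwise distinct it has a monic eigenpolynomial of every degree.
  On the nodes \<open>q\<^sup>j a\<close> the weight \<open>\<rho>\<close> equals, up to the constant \<open>a\<^sup>\<alpha>\<close>, the positive
  little q-Laguerre weight \<open>(qc)\<^sup>j (q\<^sup>j\<^sup>+\<^sup>1;q)\<^sub>\<infinity>\<close> with \<open>c = q\<^sup>\<alpha>\<close>. This weight satisfies a
  discrete Pearson equation, so summation by parts shows that the operator is symmetric
  for the weighted sum over the nodes; eigenpolynomials for different eigenvalues are
  therefore orthogonal, and the norms are positive because a nonzero polynomial cannot
  vanish at infinitely many nodes.
\<close>

section \<open>q-derivatives of polynomials\<close>

lift_definition qderiv_poly :: "real \<Rightarrow> real poly \<Rightarrow> real poly"
  is "\<lambda>z p k. coeff p (Suc k) * (1 - z ^ Suc k) / (1 - z)"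
proof -
  fix z :: real and p :: "real poly"
  have "\<forall>\<^sub>\<infinity> k. coeff p (Suc k) = 0"
    using MOST_coeff_eq_0[of p] by (rule MOST_SucI)
  then show "\<forall>\<^sub>\<infinity> k. coeff p (Suc k) * (1 - z ^ Suc k) / (1 - z) = 0"
    by (rule MOST_rev_mp) (simp add: MOST_I)
qed

lemma coeff_qderiv_poly: "coeff (qderiv_poly z p) k = coeff p (Suc k) * (1 - z ^ Suc k) / (1 - z)"
  by (simp add: qderiv_poly.rep_eq)

lemma degree_qderiv_poly_le: "degree (qderiv_poly z p) \<le> degree p"
  by (rule degree_le) (auto simp: coeff_qderiv_poly coeff_eq_0)

lemma poly_eq_sum_upto:
  fixes p :: "'a::comm_semiring_1 poly"
  assumes "degree p \<le> N"
  shows "poly p x = (\<Sum>i\<le>N. coeff p i * x ^ i)"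
proof -
  have "poly p x = (\<Sum>i\<le>degree p. coeff p i * x ^ i)" by (rule poly_altdef)
  also have "\<dots> = (\<Sum>i\<le>N. coeff p i * x ^ i)"
    by (rule sum.mono_neutral_left) (use assms in \<open>auto simp: coeff_eq_0\<close>)
  finally show ?thesis .
qed

lemma poly_qderiv_poly:
  assumes "z \<noteq> 1"
  shows "poly (qderiv_poly z p) x * ((1 - z) * x) = poly p x - poly p (z * x)"
proof -
  define N where "N = degree p"
  have "poly (qderiv_poly z p) x * ((1 - z) * x)
      = (\<Sum>k\<le>N. coeff p (Suc k) * (1 - z ^ Suc k) / (1 - z) * x ^ k) * ((1 - z) * x)"
    using poly_eq_sum_upto[OF degree_qderiv_poly_le] by (simp add: N_def coeff_qderiv_poly)
  also have "\<dots> = (\<Sum>k\<le>N. coeff p (Suc k) * (1 - z ^ Suc k) * x ^ Suc k)"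
    unfolding sum_distrib_right using assms
    by (intro sum.cong) (auto simp: field_simps)
  also have "\<dots> = (\<Sum>i\<le>Suc N. coeff p i * x ^ i - coeff p i * (z * x) ^ i)"
    by (subst sum.atMost_Suc_shift) (simp add: algebra_simps)
  also have "\<dots> = poly p x - poly p (z * x)"
    using poly_eq_sum_upto[of p "Suc N"] by (simp add: N_def sum_subtractf)
  finally show ?thesis .
qed

lemma qD_poly:
  assumes "z \<noteq> 1"
  shows "qD z (poly p) = poly (qderiv_poly z p)"
proof
  fix x
  show "qD z (poly p) x = poly (qderiv_poly z p) x"
  proof (cases "x = 0")
    case True
    have "deriv (poly p) 0 = poly (pderiv p) 0" by (rule DERIV_imp_deriv) (rule poly_DERIV)
    then show ?thesis
      using True assms by (simp add: qD_def poly_0_coeff_0 coeff_pderiv coeff_qderiv_poly)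
  next
    case False
    then show ?thesis
      using poly_qderiv_poly[OF assms, of p x] assms by (simp add: qD_def field_simps)
  qed
qed

section \<open>The q-EHT operator for \<open>\<sigma>\<^sub>1(0) = 0\<close>\<close>

text \<open>\<open>qeht_coeff q s t1 n\<close> is \<open>-\<lambda>\<^sub>n\<close>.\<close>

definition qeht_coeff :: "real \<Rightarrow> real \<Rightarrow> real \<Rightarrow> nat \<Rightarrow> real" where
  "qeht_coeff q u v k = qnum q (int k) * (v + qnum (inverse q) (int k - 1) * u)"

definition qeht_op :: "real \<Rightarrow> real \<Rightarrow> real \<Rightarrow> real \<Rightarrow> real \<Rightarrow> real poly \<Rightarrow> real poly" where
  "qeht_op q s a t1 t0 p =
     [:0, - s * a, s:] * qderiv_poly (inverse q) (qderiv_poly q p) + [:t0, t1:] * qderiv_poly q p"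

lemma qeht_coeff_0 [simp]: "qeht_coeff q u v 0 = 0"
  by (simp add: qeht_coeff_def qnum_def)

lemma qeht_coeff_Suc:
  "qeht_coeff q u v (Suc k) = (1 - q ^ Suc k) / (1 - q) * (v + (1 - inverse q ^ k) / (1 - inverse q) * u)"
proof -
  have "int (Suc k) - 1 = int k" by simp
  then show ?thesis
    by (simp only: qeht_coeff_def qnum_def power_int_of_nat)
qed

lemma coeff_qeht_op:
  assumes "q \<noteq> 1"
  shows "coeff (qeht_op q s a t1 t0 p) k =
           qeht_coeff q s t1 k * coeff p k + qeht_coeff q (- s * a) t0 (Suc k) * coeff p (Suc k)"
proof -
  \<comment> \<open>\<open>br\<close> stays folded so that \<open>simp\<close> does not clear the denominators\<close>
  define br where "br z n = (1 - z ^ n) / (1 - z)" for z :: real and n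
  have D: "coeff (qderiv_poly z r) n = coeff r (Suc n) * br z (Suc n)" for z r n
    by (simp add: coeff_qderiv_poly br_def)
  have C: "qeht_coeff q u v (Suc n) = br q (Suc n) * (v + br (inverse q) n * u)" for u v n
    by (simp add: qeht_coeff_Suc br_def)
  have br: "br q 1 = 1" "br (inverse q) 0 = 0"
    using assms by (simp_all add: br_def)
  consider "k = 0" | "k = 1" | j where "k = Suc (Suc j)"
    by (metis One_nat_def not0_implies_Suc)
  then show ?thesis
    by cases (simp_all add: qeht_op_def D C br algebra_simps)
qed

lemma qEHT_if_qeht_op_eigen:
  assumes "q \<noteq> 1" and "qeht_op q s a t1 t0 p = smult \<mu> p"
  shows "qEHT q (\<lambda>x. s * x * (x - a)) (\<lambda>x. t1 * x + t0) (- \<mu>) (poly p)"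
proof -
  have "inverse q \<noteq> 1" using assms(1) by (auto simp: inverse_eq_divide)
  moreover have "poly (qeht_op q s a t1 t0 p) x = \<mu> * poly p x" for x
    by (simp add: assms(2))
  ultimately show ?thesis
    unfolding qEHT_def qD_poly[OF assms(1)] qD_poly[OF \<open>inverse q \<noteq> 1\<close>]
    by (simp add: qeht_op_def algebra_simps)
qed

section \<open>Eigenpolynomials of bidiagonal operators\<close>

text \<open>\<open>bidiag_eigen_coeff \<mu> \<nu> n i\<close> is the coefficient of \<open>x\<^sup>n\<^sup>-\<^sup>i\<close> of the monic eigenpolynomial
  of degree \<open>n\<close>, computed downwards from the leading coefficient.\<close>

primrec bidiag_eigen_coeff :: "(nat \<Rightarrow> real) \<Rightarrow> (nat \<Rightarrow> real) \<Rightarrow> nat \<Rightarrow> nat \<Rightarrow> real" where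
  "bidiag_eigen_coeff \<mu> \<nu> n 0 = 1"
| "bidiag_eigen_coeff \<mu> \<nu> n (Suc i) =
     \<nu> (n - i) * bidiag_eigen_coeff \<mu> \<nu> n i / (\<mu> n - \<mu> (n - Suc i))"

lemma bidiagonal_eigenpoly_exists:
  fixes L :: "real poly \<Rightarrow> real poly"
  assumes coeff_L: "\<And>p k. coeff (L p) k = \<mu> k * coeff p k + \<nu> (Suc k) * coeff p (Suc k)"
    and simple: "\<And>k. k < n \<Longrightarrow> \<mu> k \<noteq> \<mu> n"
  shows "\<exists>P. degree P = n \<and> coeff P n = 1 \<and> L P = smult (\<mu> n) P"
proof -
  define P where "P = (\<Sum>i\<le>n. monom (bidiag_eigen_coeff \<mu> \<nu> n (n - i)) i)"
  have coeff_P: "coeff P k = (if k \<le> n then bidiag_eigen_coeff \<mu> \<nu> n (n - k) else 0)" for k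
    by (simp add: P_def coeff_sum)
  have "degree P = n"
    by (rule order_antisym[OF degree_le le_degree]) (simp_all add: coeff_P)
  moreover have "L P = smult (\<mu> n) P"
  proof (rule poly_eqI)
    fix k
    show "coeff (L P) k = coeff (smult (\<mu> n) P) k"
    proof (cases "k < n")
      case True
      then have "n - k = Suc (n - Suc k)" "n - (n - Suc k) = Suc k" "n - Suc (n - Suc k) = k"
        by auto
      then have "coeff P k * (\<mu> n - \<mu> k) = \<nu> (Suc k) * coeff P (Suc k)"
        using True simple[OF True] by (simp add: coeff_P)
      then show ?thesis by (simp add: coeff_L algebra_simps)
    qed (auto simp: coeff_L coeff_P)
  qed
  ultimately show ?thesis by (auto simp: coeff_P)
qed

lemma qpoch_factor_bounds:
  fixes q r :: real
  assumes "0 < q" "q < 1" "0 \<le> r" "r < 1"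
  shows "0 < 1 - r * q ^ k" "1 - r * q ^ k \<le> 1"
proof -
  have "r * q ^ k \<le> r" using assms by (intro mult_left_le power_le_one) auto
  then show "0 < 1 - r * q ^ k" "1 - r * q ^ k \<le> 1" using assms by auto
qed

lemma convergent_prod_qpoch:
  fixes q r :: real
  assumes "0 < q" "q < 1" "0 \<le> r" "r < 1"
  shows "convergent_prod (\<lambda>k. 1 - r * q ^ k)"
proof -
  have "convergent_prod (\<lambda>k. 1 + (- (r * q ^ k)))"
    using assms qpoch_factor_bounds[OF assms]
    by (intro summable_imp_convergent_prod_real) (auto simp: abs_mult summable_geometric less_imp_neq)
  then show ?thesis by simp
qed

lemma qpoch_inf_pos_le_1:
  fixes q r :: real
  assumes "0 < q" "q < 1" "0 \<le> r" "r < 1"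
  shows "0 < qpoch_inf r q" "qpoch_inf r q \<le> 1"
proof -
  note conv = convergent_prod_qpoch[OF assms]
  note factor = qpoch_factor_bounds[OF assms]
  have lim: "(\<lambda>n. \<Prod>i\<le>n. 1 - r * q ^ i) \<longlonglongrightarrow> qpoch_inf r q"
    unfolding qpoch_inf_def by (rule convergent_prod_LIMSEQ[OF conv])
  have "0 \<le> qpoch_inf r q"
    by (rule LIMSEQ_le_const[OF lim]) (auto intro: prod_nonneg less_imp_le factor)
  moreover have "qpoch_inf r q \<noteq> 0"
    unfolding qpoch_inf_def by (rule prodinf_nonzero[OF conv]) (use factor in \<open>auto simp: less_imp_neq\<close>)
  ultimately show "0 < qpoch_inf r q" by simp
  show "qpoch_inf r q \<le> 1"
    by (rule LIMSEQ_le_const2[OF lim]) (auto intro: prod_le_1 less_imp_le factor)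
qed

lemma qpoch_inf_shift:
  fixes q r :: real
  assumes "0 < q" "q < 1" "0 \<le> r" "r < 1"
  shows "qpoch_inf r q = (1 - r) * qpoch_inf (r * q) q"
proof -
  have "qpoch_inf (r * q) q = (\<Prod>k. 1 - r * q ^ Suc k)"
    by (simp add: qpoch_inf_def mult.assoc)
  also have "\<dots> = qpoch_inf r q / (1 - r)"
    unfolding qpoch_inf_def
    by (subst prodinf_split_head[OF convergent_prod_qpoch[OF assms]]) (use assms in simp_all)
  finally show ?thesis using assms by simp
qed

lemma exp_mult_ln_qpower_times:
  fixes q b :: real and \<alpha> c :: complex
  assumes "0 < q" "0 < b" "exp (\<alpha> * complex_of_real (ln q)) = c"
  shows "exp (\<alpha> * complex_of_real (ln \<bar>q ^ j * b\<bar>)) = c ^ j * exp (\<alpha> * complex_of_real (ln b))"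
proof -
  have "ln \<bar>q ^ j * b\<bar> = of_nat j * ln q + ln b"
    using assms by (simp add: ln_mult ln_realpow abs_mult)
  then have "exp (\<alpha> * complex_of_real (ln \<bar>q ^ j * b\<bar>)) =
      exp (of_nat j * (\<alpha> * complex_of_real (ln q))) * exp (\<alpha> * complex_of_real (ln b))"
    by (simp add: exp_add[symmetric] algebra_simps)
  then show ?thesis by (simp add: exp_of_nat_mult assms(3))
qed

section \<open>The little q-Laguerre weight\<close>

text \<open>
  Here \<open>c = q\<^sup>\<alpha>\<close>, so \<open>c_sigma2\<close> is the relation \<open>q\<^sup>\<alpha> = -q\<^sup>-\<^sup>2 \<sigma>\<^sub>2'(0) / (s a)\<close>, and
  \<open>weight j = (q;q)\<^sub>\<infinity> (qc)\<^sup>j / (q;q)\<^sub>j\<close> is the weight of the little q-Laguerre polynomials.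
\<close>

locale little_q_laguerre =
  fixes q s a t0 c :: real
  assumes q_pos: "0 < q" and q_less_1: "q < 1" and s_nonzero: "s \<noteq> 0" and a_pos: "0 < a"
    and c_pos: "0 < c" and qc_less_1: "q * c < 1"
    and c_sigma2: "c * s * a * q ^ 2 = - (q * ((1 - inverse q) * t0 - s * a))"
begin

definition "t1 = s * q / (1 - q)"
definition "node j = q ^ j * a"
definition "weight j = (q * c) ^ j * qpoch_inf (q ^ Suc j) q"
definition "beta = q * ((1 - inverse q) * t0 - s * a) / (1 - q)"
definition "gam y = s * q * (y - a) / (1 - q)"

abbreviation "L \<equiv> qeht_op q s a t1 t0"
abbreviation "Dq \<equiv> qderiv_poly q"

lemma q_nonzero: "q \<noteq> 0" and q_ne_1: "q \<noteq> 1"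
  using q_pos q_less_1 by auto

lemma qpower_Suc_bounds: "0 \<le> q ^ Suc j" "q ^ Suc j < 1"
  using q_pos power_Suc_less_one[OF q_pos q_less_1] by simp_all

lemma weight_pos: "0 < weight j"
  using qpoch_inf_pos_le_1(1)[OF q_pos q_less_1 qpower_Suc_bounds] q_pos c_pos
  by (simp add: weight_def)

lemma weight_le: "weight j \<le> (q * c) ^ j"
  using qpoch_inf_pos_le_1(2)[OF q_pos q_less_1 qpower_Suc_bounds] q_pos c_pos
  by (simp add: weight_def mult_left_le)

lemma weight_pearson: "weight (Suc j) * gam (node (Suc j)) = beta * weight j"
proof -
  have shift: "qpoch_inf (q ^ Suc j) q = (1 - q ^ Suc j) * qpoch_inf (q ^ Suc (Suc j)) q"
    using qpoch_inf_shift[OF q_pos q_less_1 qpower_Suc_bounds, of j]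
    by (simp add: power_Suc2[of q "Suc j"] del: power_Suc)
  have "weight (Suc j) * gam (node (Suc j)) =
      - ((q * c) ^ j * ((1 - q ^ Suc j) * qpoch_inf (q ^ Suc (Suc j)) q)) * (c * s * a * q ^ 2) / (1 - q)"
    by (simp add: weight_def gam_def node_def field_simps power2_eq_square)
  also have "\<dots> = beta * weight j"
    unfolding c_sigma2 shift[symmetric] by (simp add: beta_def weight_def)
  finally show ?thesis .
qed

lemma node_Suc: "node (Suc j) = q * node j"
  by (simp add: node_def)

lemma node_nonzero: "node j \<noteq> 0"
  using q_pos a_pos by (simp add: node_def)

lemma inj_node: "inj node"
proof (rule injI)
  fix m n assume "node m = node n"
  then have "q ^ m = q ^ n" using a_pos by (simp add: node_def)
  then show "m = n"
    using power_inject_exp'[OF q_ne_1 q_pos] by simp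
qed

lemma node_tendsto_0: "node \<longlonglongrightarrow> 0"
  unfolding node_def[abs_def]
  using LIMSEQ_power_zero[of q] q_pos q_less_1 by (auto intro: tendsto_mult_left_zero)

lemma summable_weighted:
  assumes "u \<longlonglongrightarrow> l"
  shows "summable (\<lambda>j. weight j * u j)"
proof -
  obtain K where K: "\<And>n. norm (u n) \<le> K"
    using convergent_imp_Bseq[OF convergentI[OF assms]] by (meson BseqE)
  show ?thesis
  proof (rule summable_comparison_test')
    show "summable (\<lambda>j. K * (q * c) ^ j)"
      using q_pos c_pos qc_less_1 by (intro summable_mult summable_geometric) simp
    show "norm (weight j * u j) \<le> K * (q * c) ^ j" for j
      using weight_pos[of j] weight_le[of j] K[of j] abs_ge_zero[of "u j"]
      by (simp add: abs_mult mult.commute mult_mono)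
  qed
qed

lemma poly_qeht_op:
  assumes "y \<noteq> 0"
  shows "poly (L p) y = - beta * poly (Dq p) y + gam y * poly (Dq p) (y / q)"
proof -
  have "inverse q \<noteq> 1" using q_ne_1 by (auto simp: inverse_eq_divide)
  from poly_qderiv_poly[OF this, of "Dq p" y]
  have DD: "poly (qderiv_poly (inverse q) (Dq p)) y =
        (poly (Dq p) y - poly (Dq p) (y / q)) / ((1 - inverse q) * y)"
    using assms q_ne_1 q_nonzero by (simp add: field_simps)
  have "poly (L p) y =
      s * y * (y - a) * poly (qderiv_poly (inverse q) (Dq p)) y + (t1 * y + t0) * poly (Dq p) y"
    by (simp add: qeht_op_def algebra_simps)
  also have "\<dots> = - s * q * (y - a) * (poly (Dq p) y - poly (Dq p) (y / q)) / (1 - q)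
                    + (t1 * y + t0) * poly (Dq p) y"
    unfolding DD using assms q_ne_1 q_nonzero by (simp add: field_simps)
  also have "\<dots> = - beta * poly (Dq p) y + gam y * poly (Dq p) (y / q)"
  proof -
    have beta: "beta = ((q - 1) * t0 - s * a * q) / (1 - q)"
      using q_nonzero q_ne_1 by (simp add: beta_def field_simps)
    show ?thesis
      unfolding beta using q_ne_1 by (simp add: t1_def gam_def field_simps)
  qed
  finally show ?thesis .
qed

text \<open>Summation by parts: by \<open>weight_pearson\<close> the \<open>gam\<close>-terms, shifted by one node, cancel the
  \<open>beta\<close>-terms up to a symmetric remainder, and \<open>gam a = 0\<close> removes the boundary term.\<close>

lemma sums_weighted_qeht_op:
  "(\<lambda>j. weight j * (poly g (node j) * poly (L f) (node j))) sums
     (- beta * (1 - q) * (\<Sum>j. weight j * (node j * poly (Dq g) (node j) * poly (Dq f) (node j))))"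
proof -
  define A where "A j = weight j * (poly g (node j) * (- beta * poly (Dq f) (node j)))" for j
  define B where "B j = weight j * (poly g (node j) * (gam (node j) * poly (Dq f) (node j / q)))" for j
  define E where "E j = weight j * (node j * poly (Dq g) (node j) * poly (Dq f) (node j))" for j
  have split: "weight j * (poly g (node j) * poly (L f) (node j)) = A j + B j" for j
    by (simp add: poly_qeht_op[OF node_nonzero] A_def B_def algebra_simps)
  have B_0: "B 0 = 0"
    by (simp add: B_def gam_def node_def)
  have B_Suc: "B (Suc j) = - beta * (1 - q) * E j - A j" for j
  proof -
    have g_Suc: "poly g (node (Suc j)) = poly g (node j) - (1 - q) * node j * poly (Dq g) (node j)"
      using poly_qderiv_poly[OF q_ne_1, of g "node j"] by (simp add: node_Suc algebra_simps)
    have "node (Suc j) / q = node j"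
      using q_nonzero by (simp add: node_Suc)
    then have "B (Suc j) = weight (Suc j) * gam (node (Suc j)) * poly g (node (Suc j)) * poly (Dq f) (node j)"
      by (simp add: B_def)
    then show ?thesis
      by (simp add: weight_pearson g_Suc A_def E_def algebra_simps)
  qed
  have summable_A: "summable A"
    unfolding A_def
    by (rule summable_weighted[of _ "poly g 0 * (- beta * poly (Dq f) 0)"])
      (intro tendsto_intros node_tendsto_0)
  have "E sums (\<Sum>j. E j)"
    unfolding E_def
    by (rule summable_sums, rule summable_weighted[of _ "0 * poly (Dq g) 0 * poly (Dq f) 0"])
      (intro tendsto_intros node_tendsto_0)
  then have "(\<lambda>j. - beta * (1 - q) * E j - A j) sums (- beta * (1 - q) * (\<Sum>j. E j) - (\<Sum>j. A j))"
    by (intro sums_diff sums_mult summable_sums[OF summable_A])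
  then have "(\<lambda>j. B (Suc j)) sums (- beta * (1 - q) * (\<Sum>j. E j) - (\<Sum>j. A j))"
    by (simp only: B_Suc)
  then have "B sums (- beta * (1 - q) * (\<Sum>j. E j) - (\<Sum>j. A j))"
    by (simp add: sums_Suc_iff B_0)
  then have "(\<lambda>j. A j + B j) sums ((\<Sum>j. A j) + (- beta * (1 - q) * (\<Sum>j. E j) - (\<Sum>j. A j)))"
    by (intro sums_add summable_sums[OF summable_A])
  then show ?thesis
    by (simp add: split E_def)
qed

lemma weighted_sum_qeht_op_sym:
  "(\<Sum>j. weight j * (poly g (node j) * poly (L f) (node j))) =
   (\<Sum>j. weight j * (poly f (node j) * poly (L g) (node j)))"
  using sums_unique[OF sums_weighted_qeht_op[of g f]] sums_unique[OF sums_weighted_qeht_op[of f g]]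
  by (simp add: mult_ac)

lemma summable_weighted_product: "summable (\<lambda>j. weight j * (poly f (node j) * poly g (node j)))"
  by (rule summable_weighted[of _ "poly f 0 * poly g 0"]) (intro tendsto_intros node_tendsto_0)

lemma eigenpolys_orthogonal:
  assumes "L f = smult \<mu> f" "L g = smult \<nu> g" "\<mu> \<noteq> \<nu>"
  shows "(\<lambda>j. weight j * (poly f (node j) * poly g (node j))) sums 0"
proof -
  define S where "S = (\<Sum>j. weight j * (poly f (node j) * poly g (node j)))"
  have sums_S: "(\<lambda>j. weight j * (poly f (node j) * poly g (node j))) sums S"
    unfolding S_def by (rule summable_sums[OF summable_weighted_product])
  have "(\<lambda>j. weight j * (poly g (node j) * poly (L f) (node j))) sums (\<mu> * S)"
    using sums_mult[OF sums_S, of \<mu>] by (simp add: assms(1) mult_ac)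
  moreover have "(\<lambda>j. weight j * (poly f (node j) * poly (L g) (node j))) sums (\<nu> * S)"
    using sums_mult[OF sums_S, of \<nu>] by (simp add: assms(2) mult_ac)
  ultimately have "\<mu> * S = \<nu> * S"
    using weighted_sum_qeht_op_sym[of g f] by (simp add: sums_iff)
  then have "S = 0" using assms(3) by simp
  then show ?thesis using sums_S by simp
qed

lemma weighted_norm_pos:
  assumes "f \<noteq> 0"
  shows "0 < (\<Sum>j. weight j * (poly f (node j) * poly f (node j)))"
proof -
  have "\<not> range node \<subseteq> {y. poly f y = 0}"
    using poly_roots_finite[OF assms] finite_subset range_inj_infinite[OF inj_node] by blast
  then obtain j where j: "poly f (node j) \<noteq> 0" by auto
  show ?thesis
  proof (rule suminf_pos2[OF summable_weighted_product])
    show "0 \<le> weight i * (poly f (node i) * poly f (node i))" for i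
      using weight_pos[of i] by simp
    show "0 < weight j * (poly f (node j) * poly f (node j))"
      using weight_pos[of j] j not_real_square_gt_zero by (blast intro: mult_pos_pos)
  qed
qed

lemma eigenvalue_closed_form: "qeht_coeff q s t1 k = s * q\<^sup>2 / (1 - q)\<^sup>2 * (1 / q ^ k - 1)"
proof (cases k)
  case (Suc j)
  define w where "w = 1 - q"
  have nz: "w \<noteq> 0" "q ^ j \<noteq> 0"
    using q_nonzero q_ne_1 by (auto simp: w_def)
  have inv: "1 - inverse q ^ j = - (1 - q ^ j) / q ^ j" "1 - inverse q = - w / q"
    using q_nonzero by (simp_all add: w_def field_simps)
  have quot: "(1 - inverse q ^ j) / (1 - inverse q) = q * (1 - q ^ j) / (w * q ^ j)"
    unfolding inv using q_nonzero nz by (simp add: field_simps)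
  have "t1 + (1 - inverse q ^ j) / (1 - inverse q) * s = s * q / (w * q ^ j)"
    unfolding quot t1_def w_def[symmetric] using nz by (simp add: field_simps)
  then have "qeht_coeff q s t1 k = (1 - q * q ^ j) / w * (s * q / (w * q ^ j))"
    by (simp only: Suc qeht_coeff_Suc w_def power_Suc)
  also have "\<dots> = s * q\<^sup>2 / w\<^sup>2 * (1 / q ^ k - 1)"
    using Suc q_nonzero nz by (simp add: field_simps power2_eq_square)
  finally show ?thesis by (simp add: w_def)
qed simp

lemma inj_eigenvalue: "inj (qeht_coeff q s t1)"
proof (rule injI)
  fix m n assume "qeht_coeff q s t1 m = qeht_coeff q s t1 n"
  then have "q ^ m = q ^ n"
    using s_nonzero q_nonzero q_ne_1 by (simp add: eigenvalue_closed_form)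
  then show "m = n"
    using power_inject_exp'[OF q_ne_1 q_pos] by simp
qed

lemma eigenpoly_exists:
  "\<exists>P. degree P = n \<and> coeff P n = 1 \<and> L P = smult (qeht_coeff q s t1 n) P"
  by (rule bidiagonal_eigenpoly_exists[OF coeff_qeht_op[OF q_ne_1]])
    (use inj_eigenvalue in \<open>auto dest: injD\<close>)

lemma eigenpolys_sums:
  assumes "\<And>n. L (P n) = smult (qeht_coeff q s t1 n) (P n)"
  shows "(\<lambda>j. weight j * (poly (P n) (node j) * poly (P m) (node j))) sums
           (if m = n then (\<Sum>j. weight j * (poly (P n) (node j) * poly (P n) (node j))) else 0)"
proof (cases "m = n")
  case False
  then have "qeht_coeff q s t1 n \<noteq> qeht_coeff q s t1 m"
    using inj_eigenvalue by (auto dest: injD)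
  with False show ?thesis
    using eigenpolys_orthogonal[OF assms assms] by simp
qed (simp add: summable_sums summable_weighted_product)

lemma has_qint_weighted:
  assumes \<alpha>: "exp (\<alpha> * complex_of_real (ln q)) = complex_of_real c"
    and sums: "(\<lambda>j. weight j * h (node j)) sums S"
  shows "has_qint q
           (\<lambda>x. complex_of_real (h x) *
                (exp (\<alpha> * complex_of_real (ln \<bar>x\<bar>)) * complex_of_real (qpoch_inf (q * x / a) q)))
           a (complex_of_real ((1 - q) * a * S) * exp (\<alpha> * complex_of_real (ln a)))"
proof -
  define K where "K = exp (\<alpha> * complex_of_real (ln a))"
  have jackson_term: "complex_of_real ((1 - q) * a * q ^ j) *
      (complex_of_real (h (q ^ j * a)) *
       (exp (\<alpha> * complex_of_real (ln \<bar>q ^ j * a\<bar>)) * complex_of_real (qpoch_inf (q * (q ^ j * a) / a) q)))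
    = complex_of_real ((1 - q) * a * (weight j * h (node j))) * K" for j
  proof -
    have "exp (\<alpha> * complex_of_real (ln \<bar>q ^ j * a\<bar>)) = complex_of_real c ^ j * K"
      unfolding K_def by (rule exp_mult_ln_qpower_times[OF q_pos a_pos \<alpha>])
    moreover have "q * (q ^ j * a) / a = q ^ Suc j"
      using a_pos by simp
    ultimately show ?thesis
      by (simp add: weight_def node_def power_mult_distrib mult_ac)
  qed
  have "(\<lambda>j. complex_of_real ((1 - q) * a * (weight j * h (node j)))) sums complex_of_real ((1 - q) * a * S)"
    unfolding sums_of_real_iff by (rule sums_mult[OF sums])
  then show ?thesis
    unfolding has_qint_def jackson_term K_def[symmetric] by (rule sums_mult2)
qed

end

theorem theorem5p18:
  fixes q s a1 t0 t1 b :: real and \<alpha> :: complex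
    and \<sigma>1 \<tau> :: "real \<Rightarrow> real"
  assumes q: "0 < q" "q < 1"
    and s: "s \<noteq> 0"
    and a1: "a1 > 0"
    and \<sigma>1_def: "\<sigma>1 = (\<lambda>x. s * x * (x - a1))"
    and \<tau>_def: "\<tau> = (\<lambda>x. t1 * x + t0)"
    and t1: "t1 \<noteq> 0"
    and ratio: "t1 / s = - 1 / (1 - inverse q)"
    and \<sigma>2': "q * ((1 - inverse q) * t0 - s * a1) \<noteq> 0"
    and y0: "0 < q * (inverse q * (1 - (1 - inverse q) / a1 * (t0 / s)))"
            "q * (inverse q * (1 - (1 - inverse q) / a1 * (t0 / s))) < 1"
    and b: "b = a1"
    and \<alpha>: "exp (\<alpha> * complex_of_real (ln q)) =
            complex_of_real (- (inverse q ^ 2 * (q * ((1 - inverse q) * t0 - s * a1))) / (s * b))"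
  shows "\<exists>(P :: nat \<Rightarrow> real poly) (d :: nat \<Rightarrow> complex).
           (\<forall>n. degree (P n) = n \<and>
                qEHT q \<sigma>1 \<tau> (- qnum q (int n) * (t1 + qnum (inverse q) (int n - 1) * s))
                     (poly (P n))) \<and>
           (\<forall>n. d n \<noteq> 0) \<and>
           (\<forall>m n. has_qint q
                  (\<lambda>x. complex_of_real (poly (P n) x * poly (P m) x) *
                       (exp (\<alpha> * complex_of_real (ln \<bar>x\<bar>)) *
                        complex_of_real (qpoch_inf (q * x / b) q)))
                  b (if m = n then d n else 0))"
proof -
  define c where "c = - (inverse q ^ 2 * (q * ((1 - inverse q) * t0 - s * a1))) / (s * b)"
  have qc: "q * c = q * (inverse q * (1 - (1 - inverse q) / a1 * (t0 / s)))"
    using q a1 s by (simp add: c_def b field_simps power2_eq_square)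
  interpret little_q_laguerre q s a1 t0 c
  proof
    show "0 < c" using y0(1) q unfolding qc[symmetric] by (simp add: zero_less_mult_iff)
    show "c * s * a1 * q\<^sup>2 = - (q * ((1 - inverse q) * t0 - s * a1))"
      using q a1 s by (simp add: c_def b field_simps power2_eq_square)
  qed (use q s a1 y0 qc in auto)
  have t1_eq: "little_q_laguerre.t1 q s = t1"
    using ratio s q by (simp add: t1_def field_simps)
  obtain P where P: "\<And>n. degree (P n) = n" "\<And>n. coeff (P n) n = 1"
    and eigen: "\<And>n. qeht_op q s a1 t1 t0 (P n) = smult (qeht_coeff q s t1 n) (P n)"
    using eigenpoly_exists[unfolded t1_eq] by metis
  define nrm where "nrm n = (\<Sum>j. weight j * (poly (P n) (node j) * poly (P n) (node j)))" for n
  define d where "d n = complex_of_real ((1 - q) * a1 * nrm n) * exp (\<alpha> * complex_of_real (ln a1))" for n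
  show ?thesis
  proof (intro exI conjI allI)
    fix n
    show "degree (P n) = n" by (rule P(1))
    show "qEHT q \<sigma>1 \<tau> (- qnum q (int n) * (t1 + qnum (inverse q) (int n - 1) * s)) (poly (P n))"
      using qEHT_if_qeht_op_eigen[OF q_ne_1 eigen] unfolding \<sigma>1_def \<tau>_def qeht_coeff_def by simp
    have "P n \<noteq> 0" using P(2)[of n] by auto
    then have "nrm n \<noteq> 0"
      unfolding nrm_def using weighted_norm_pos by (metis less_irrefl)
    then show "d n \<noteq> 0" using q a1 by (simp add: d_def)
  next
    fix m n
    have "(if m = n then d n else 0) = complex_of_real ((1 - q) * a1 *
        (if m = n then (\<Sum>j. weight j * (poly (P n) (node j) * poly (P n) (node j))) else 0)) *
        exp (\<alpha> * complex_of_real (ln a1))"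
      by (simp add: d_def nrm_def)
    then show "has_qint q
        (\<lambda>x. complex_of_real (poly (P n) x * poly (P m) x) *
             (exp (\<alpha> * complex_of_real (ln \<bar>x\<bar>)) * complex_of_real (qpoch_inf (q * x / b) q)))
        b (if m = n then d n else 0)"
      unfolding b by (simp only: has_qint_weighted[OF \<alpha>[folded c_def] eigenpolys_sums[unfolded t1_eq, OF eigen]])
  qed
qed

end
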